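(* Let $n\in\mathbb{N}$, $A,V\in\mathbb{C}^{n\times n}$ with $V$ invertible, $0\le\rho\in L^1(\mathbb{R})\cap L^\infty(\mathbb{R})$ and $s\in(0,1)$. Then for all $\lambda>0$, \[ \int_{\mathbb{R}}|\det(A+rV)|^{-s/n}\rho(r)\,dr\le|\det V|^{-s/n}\|\rho\|_{L^1}^{1-s}\|\rho\|_\infty^{s}\frac{2^s s^{-s}}{1-s}\le|\det V|^{-s/n}\Bigl(\lambda^{-s}\|\rho\|_{L^1}+\frac{2\lambda^{1-s}}{1-s}\|\rho\|_\infty\Bigr). \] *)

theory Defs
  imports "HOL-Analysis.Analysis" "HOL-Probability.Essential_Supremum"
begin

definition linf_norm :: "(real \<Rightarrow> real) \<Rightarrow> real" where
  "linf_norm f = real_of_ereal (esssup lborel (\<lambda>x. ereal \<bar>f x\<bar>))"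

definition l1_norm :: "(real \<Rightarrow> real) \<Rightarrow> real" where
  "l1_norm f = (\<integral>x. \<bar>f x\<bar> \<partial>lborel)"

end

theory Submission
  imports Defs "HOL-Computational_Algebra.Fundamental_Theorem_Algebra"
begin

text \<open>
  For real \<open>r\<close>, \<open>det (A + r V) = det V \<cdot> \<Prod>\<^sub>i (r - z\<^sub>i)\<close> with complex roots \<open>z\<^sub>i\<close>,
  and \<open>|r - z\<^sub>i| \<ge> |r - Re z\<^sub>i|\<close>. By AM-GM, \<open>|det (A + r V)|\<^sup>-\<^sup>s\<^sup>/\<^sup>n\<close> is therefore at most
  \<open>|det V|\<^sup>-\<^sup>s\<^sup>/\<^sup>n\<close> times the mean of the one-dimensional singularities \<open>|r - Re z\<^sub>i|\<^sup>-\<^sup>s\<close>.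
  Each of these is integrated against \<open>\<rho>\<close> by splitting at distance \<open>t\<close> from the
  singularity: outside, \<open>|r - a|\<^sup>-\<^sup>s \<le> t\<^sup>-\<^sup>s\<close> and \<open>\<rho>\<close> contributes its \<open>L\<^sup>1\<close> norm; inside,
  \<open>\<rho> \<le> \<parallel>\<rho>\<parallel>\<^sub>\<infinity>\<close> and \<open>|r - a|\<^sup>-\<^sup>s\<close> is integrable. Optimising over \<open>t\<close> gives the first
  inequality; the second is Young's inequality, i.e. the optimum is below the value at \<open>t = \<lambda>\<close>.
\<close>

lemma nn_integral_abs_powr_interval:
  fixes s t a :: real
  assumes s: "0 < s" "s < 1" and t: "0 < t"
  shows "(\<integral>\<^sup>+ x. ennreal (indicator {-t..t} (x - a) * \<bar>x - a\<bar> powr (-s)) \<partial>lborel)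
         = ennreal (2 * t powr (1 - s) / (1 - s))"
proof -
  have right: "((\<lambda>x. \<bar>x\<bar> powr (-s)) has_integral (t powr (1 - s) / (1 - s))) {0..t}"
    using has_integral_powr_from_0[of "-s" t] s t
    by (auto intro: has_integral_eq[rotated])
  have "((\<lambda>x. (-x) powr (-s)) has_integral (t powr (1 - s) / (1 - s))) {-t..-0}"
    using has_integral_powr_from_0[of "-s" t] s t by (subst has_integral_reflect_real) simp
  then have "((\<lambda>x. (-x) powr (-s)) has_integral (t powr (1 - s) / (1 - s))) {-t..0}"
    by simp
  then have left: "((\<lambda>x. \<bar>x\<bar> powr (-s)) has_integral (t powr (1 - s) / (1 - s))) {-t..0}"
    by (rule has_integral_eq[rotated]) auto
  have both: "((\<lambda>x. \<bar>x\<bar> powr (-s)) has_integral (2 * t powr (1 - s) / (1 - s))) {-t..t}"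
    using has_integral_combine[OF _ _ left right] t by simp
  have restrict: "(\<lambda>x. indicator {-t..t} x * \<bar>x\<bar> powr (-s))
                 = (\<lambda>x. if x \<in> {-t..t} then \<bar>x\<bar> powr (-s) else 0)"
    by (auto simp: indicator_def)
  have "((\<lambda>x. indicator {-t..t} x * \<bar>x\<bar> powr (-s)) has_integral (2 * t powr (1 - s) / (1 - s))) UNIV"
    unfolding restrict has_integral_restrict_UNIV by (rule both)
  then have "(\<integral>\<^sup>+ x. ennreal (indicator {-t..t} x * \<bar>x\<bar> powr (-s)) \<partial>lborel)
         = ennreal (2 * t powr (1 - s) / (1 - s))"
    by (subst nn_integral_has_integral_lborel) auto
  then show ?thesis
    using nn_integral_real_affine[of "\<lambda>x. ennreal (indicator {-t..t} x * \<bar>x\<bar> powr (-s))" 1 "-a"]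
    by simp
qed

lemma nn_integral_abs_powr_weight_le:
  fixes s t a b :: real and \<rho> :: "real \<Rightarrow> real"
  assumes s: "0 < s" "s < 1" and t: "0 < t" and b: "0 \<le> b"
    and nn: "\<And>r. 0 \<le> \<rho> r" and int: "integrable lborel \<rho>"
    and bd: "AE r in lborel. \<rho> r \<le> b"
  shows "(\<integral>\<^sup>+ r. ennreal (\<bar>r - a\<bar> powr (-s) * \<rho> r) \<partial>lborel)
     \<le> ennreal (t powr (-s) * (\<integral>r. \<rho> r \<partial>lborel) + 2 * t powr (1 - s) / (1 - s) * b)"
proof -
  have [measurable]: "\<rho> \<in> borel_measurable borel"
    using int by (simp add: borel_measurable_integrable)
  let ?near = "\<lambda>r. indicator {-t..t} (r - a) * \<bar>r - a\<bar> powr (-s)"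
  have pointwise: "\<bar>r - a\<bar> powr (-s) * \<rho> r \<le> t powr (-s) * \<rho> r + b * ?near r"
    if "\<rho> r \<le> b" for r
  proof (cases "\<bar>r - a\<bar> \<le> t")
    case True
    have "\<bar>r - a\<bar> powr (-s) * \<rho> r \<le> \<bar>r - a\<bar> powr (-s) * b"
      using that by (intro mult_left_mono) auto
    moreover have "0 \<le> t powr (-s) * \<rho> r" using nn by simp
    ultimately show ?thesis using True by (auto simp: indicator_def algebra_simps)
  next
    case False
    have "\<bar>r - a\<bar> powr (-s) \<le> t powr (-s)"
      using False s t by (intro powr_mono2') auto
    then have "\<bar>r - a\<bar> powr (-s) * \<rho> r \<le> t powr (-s) * \<rho> r"
      using nn by (intro mult_right_mono) auto
    moreover have "0 \<le> b * ?near r" using b by simp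
    ultimately show ?thesis by linarith
  qed
  have "(\<integral>\<^sup>+ r. ennreal (\<bar>r - a\<bar> powr (-s) * \<rho> r) \<partial>lborel)
     \<le> (\<integral>\<^sup>+ r. ennreal (t powr (-s) * \<rho> r + b * ?near r) \<partial>lborel)"
    using bd by (intro nn_integral_mono_AE) (auto elim!: eventually_mono intro!: ennreal_leI pointwise)
  also have "\<dots> = (\<integral>\<^sup>+ r. ennreal (t powr (-s)) * ennreal (\<rho> r) + ennreal b * ennreal (?near r) \<partial>lborel)"
    using b nn by (intro nn_integral_cong) (simp add: ennreal_mult)
  also have "\<dots> = ennreal (t powr (-s)) * (\<integral>\<^sup>+ r. ennreal (\<rho> r) \<partial>lborel)
                  + ennreal b * (\<integral>\<^sup>+ r. ennreal (?near r) \<partial>lborel)"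
    by (subst nn_integral_add) (auto simp: nn_integral_cmult)
  also have "(\<integral>\<^sup>+ r. ennreal (\<rho> r) \<partial>lborel) = ennreal (\<integral>r. \<rho> r \<partial>lborel)"
    using int nn by (intro nn_integral_eq_integral) auto
  also note nn_integral_abs_powr_interval[OF s t, of a]
  also have "ennreal (t powr (-s)) * ennreal (\<integral>r. \<rho> r \<partial>lborel)
               + ennreal b * ennreal (2 * t powr (1 - s) / (1 - s))
             = ennreal (t powr (-s) * (\<integral>r. \<rho> r \<partial>lborel) + 2 * t powr (1 - s) / (1 - s) * b)"
    using b s t nn by (simp add: ennreal_mult[symmetric] mult.commute)
  finally show ?thesis .
qed

lemma degree_coeff_prod_linear:
  fixes a b :: "'i \<Rightarrow> 'a::comm_ring_1"
  assumes "finite I"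
  shows "degree (\<Prod>i\<in>I. [:a i, b i:]) \<le> card I \<and> coeff (\<Prod>i\<in>I. [:a i, b i:]) (card I) = (\<Prod>i\<in>I. b i)"
  using assms
proof (induction I rule: finite_induct)
  case empty
  then show ?case by simp
next
  case (insert x F)
  let ?Q = "\<Prod>i\<in>F. [:a i, b i:]"
  have "degree [:a x, b x:] \<le> 1" using degree_pCons_le[of "a x" "[:b x:]"] by simp
  then have "degree ([:a x, b x:] * ?Q) \<le> Suc (card F)"
    using degree_mult_le[of "[:a x, b x:]" ?Q] insert.IH by linarith
  moreover have "coeff ?Q (Suc (card F)) = 0"
    using insert.IH by (intro coeff_eq_0) auto
  then have "coeff ([:a x, b x:] * ?Q) (Suc (card F)) = b x * coeff ?Q (card F)"
    by (simp add: mult_pCons_left)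
  ultimately show ?case using insert by simp
qed

lemma det_affine_poly:
  fixes A V :: "'a::comm_ring_1 ^ 'n ^ 'n"
  obtains P where "degree P \<le> CARD('n)" "coeff P CARD('n) = det V"
    "\<And>c. poly P c = det (\<chi> i j. A$i$j + c * V$i$j)"
proof
  define P where "P = (\<Sum>p\<in>{p. p permutes (UNIV::'n set)}.
                    smult (of_int (sign p)) (\<Prod>i\<in>UNIV. [:A$i$p i, V$i$p i:]))"
  show "degree P \<le> CARD('n)"
    unfolding P_def
  proof (intro degree_sum_le)
    fix p
    show "degree (smult (of_int (sign p)) (\<Prod>i\<in>UNIV. [:A$i$p i, V$i$p i:])) \<le> CARD('n)"
      using degree_coeff_prod_linear[of "UNIV::'n set" "\<lambda>i. A$i$p i" "\<lambda>i. V$i$p i"]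
      by (auto intro: order.trans[OF degree_smult_le])
  qed simp
  show "coeff P CARD('n) = det V"
    unfolding P_def det_def coeff_sum coeff_smult
    by (intro sum.cong refl) (simp add: degree_coeff_prod_linear[of "UNIV::'n set", THEN conjunct2])
  show "poly P c = det (\<chi> i j. A$i$j + c * V$i$j)" for c
    unfolding P_def det_def by (simp add: poly_sum poly_prod algebra_simps)
qed

lemma det_affine_eq_prod_roots:
  fixes A V :: "complex ^ 'n ^ 'n"
  assumes "det V \<noteq> 0"
  obtains z :: "nat \<Rightarrow> complex"
  where "\<And>x::real. det (A + x *\<^sub>R V) = det V * (\<Prod>i<CARD('n). of_real x - z i)"
proof -
  obtain P where P: "degree P \<le> CARD('n)" "coeff P CARD('n) = det V"
    and poly_P: "\<And>c. poly P c = det (\<chi> i j. A$i$j + c * V$i$j)"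
    using det_affine_poly[of V A] by blast
  have deg: "degree P = CARD('n)"
    using P assms le_degree[of P "CARD('n)"] by fastforce
  obtain z where z: "smult (lead_coeff P) (\<Prod>i<degree P. [:-z i, 1:]) = P"
    using complex_poly_decompose' by blast
  have "det (A + x *\<^sub>R V) = det V * (\<Prod>i<CARD('n). of_real x - z i)" for x :: real
  proof -
    have "A + x *\<^sub>R V = (\<chi> i j. A$i$j + of_real x * V$i$j)"
      using scaleR_conv_of_real[of x "V$i$j" for i j] by (simp add: vec_eq_iff)
    then have "det (A + x *\<^sub>R V) = poly P (of_real x)"
      by (simp add: poly_P)
    also have "\<dots> = det V * (\<Prod>i<CARD('n). of_real x - z i)"
      by (subst z[symmetric]) (simp add: poly_prod deg P)
    finally show ?thesis .
  qed
  then show ?thesis by (rule that)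
qed

lemma prod_norm_powr_le_mean:
  fixes x s :: real and z :: "nat \<Rightarrow> complex"
  assumes n: "0 < n" and s: "0 < s" and x: "\<And>i. i < n \<Longrightarrow> x \<noteq> Re (z i)"
  shows "(\<Prod>i<n. cmod (of_real x - z i)) powr (- s / n) \<le> (\<Sum>i<n. \<bar>x - Re (z i)\<bar> powr (-s)) / n"
proof -
  have near: "\<bar>x - Re (z i)\<bar> \<le> cmod (of_real x - z i)" for i
    using abs_Re_le_cmod[of "of_real x - z i"] by simp
  have "(\<Prod>i<n. cmod (of_real x - z i)) powr (- s / n)
      = (\<Prod>i<n. cmod (of_real x - z i) powr (-s)) powr (1 / n)"
    by (simp add: prod_powr_distrib powr_powr)
  also have "\<dots> \<le> (\<Sum>i<n. cmod (of_real x - z i) powr (-s) / n)"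
    using arith_geom_mean[of "{..<n}" "\<lambda>i. cmod (of_real x - z i) powr (-s)"] n
    by (simp add: lessThan_empty_iff)
  also have "\<dots> \<le> (\<Sum>i<n. \<bar>x - Re (z i)\<bar> powr (-s) / n)"
    using near x s by (intro sum_mono divide_right_mono powr_mono2') auto
  finally show ?thesis by (simp add: sum_divide_distrib)
qed

lemma nn_integral_det_affine_powr_le:
  fixes A V :: "complex ^ 'n ^ 'n" and \<rho> :: "real \<Rightarrow> real" and s t b :: real
  assumes V: "det V \<noteq> 0" and s: "0 < s" "s < 1" and t: "0 < t" and b: "0 \<le> b"
    and nn: "\<And>r. 0 \<le> \<rho> r" and int: "integrable lborel \<rho>"
    and bd: "AE r in lborel. \<rho> r \<le> b"
  shows "(\<integral>\<^sup>+ r. ennreal (cmod (det (A + r *\<^sub>R V)) powr (- s / CARD('n)) * \<rho> r) \<partial>lborel)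
     \<le> ennreal (cmod (det V) powr (- s / CARD('n))
                 * (t powr (-s) * (\<integral>r. \<rho> r \<partial>lborel) + 2 * t powr (1 - s) / (1 - s) * b))"
proof -
  define n where "n = CARD('n)"
  define K where "K = cmod (det V) powr (- s / n)"
  define F where "F = t powr (-s) * (\<integral>r. \<rho> r \<partial>lborel) + 2 * t powr (1 - s) / (1 - s) * b"
  have n: "0 < n" and K: "0 < K" and F: "0 \<le> F"
    using V s t b nn by (simp_all add: n_def K_def F_def)
  obtain z where z: "\<And>x::real. det (A + x *\<^sub>R V) = det V * (\<Prod>i<n. of_real x - z i)"
    using det_affine_eq_prod_roots[OF V] unfolding n_def by blast
  let ?sing = "\<lambda>i r. \<bar>r - Re (z i)\<bar> powr (-s) * \<rho> r"
  have pointwise: "cmod (det (A + r *\<^sub>R V)) powr (- s / n) * \<rho> r \<le> (\<Sum>i<n. K / n * ?sing i r)"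
    if r: "r \<notin> (\<lambda>i. Re (z i)) ` {..<n}" for r
  proof -
    have "cmod (det (A + r *\<^sub>R V)) powr (- s / n)
          = K * (\<Prod>i<n. cmod (of_real r - z i)) powr (- s / n)"
      by (simp add: z K_def norm_mult prod_norm powr_mult)
    also have "\<dots> \<le> K * ((\<Sum>i<n. \<bar>r - Re (z i)\<bar> powr (-s)) / n)"
      using r K by (intro mult_left_mono prod_norm_powr_le_mean[OF n s(1)]) auto
    finally have "cmod (det (A + r *\<^sub>R V)) powr (- s / n) * \<rho> r
                  \<le> K * ((\<Sum>i<n. \<bar>r - Re (z i)\<bar> powr (-s)) / n) * \<rho> r"
      using nn by (rule mult_right_mono)
    also have "\<dots> = (\<Sum>i<n. K / n * ?sing i r)"
      by (simp add: sum_distrib_left sum_distrib_right sum_divide_distrib mult_ac)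
    finally show ?thesis .
  qed
  have "(\<integral>\<^sup>+ r. ennreal (cmod (det (A + r *\<^sub>R V)) powr (- s / n) * \<rho> r) \<partial>lborel)
     \<le> (\<integral>\<^sup>+ r. (\<Sum>i<n. ennreal (K / n) * ennreal (?sing i r)) \<partial>lborel)"
  proof (rule nn_integral_mono_AE)
    have "AE r in lborel. r \<notin> (\<lambda>i. Re (z i)) ` {..<n}"
      by (intro AE_not_in finite_imp_null_set_lborel) simp
    then show "AE r in lborel. ennreal (cmod (det (A + r *\<^sub>R V)) powr (- s / n) * \<rho> r)
                 \<le> (\<Sum>i<n. ennreal (K / n) * ennreal (?sing i r))"
    proof eventually_elim
      case (elim r)
      have "ennreal (cmod (det (A + r *\<^sub>R V)) powr (- s / n) * \<rho> r)
              \<le> ennreal (\<Sum>i<n. K / n * ?sing i r)"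
        by (rule ennreal_leI[OF pointwise[OF elim]])
      also have "\<dots> = (\<Sum>i<n. ennreal (K / n * ?sing i r))"
        using K nn by (intro sum_ennreal[symmetric]) auto
      also have "\<dots> = (\<Sum>i<n. ennreal (K / n) * ennreal (?sing i r))"
        using K nn by (intro sum.cong refl ennreal_mult) auto
      finally show ?case .
    qed
  qed
  also have "\<dots> = (\<Sum>i<n. ennreal (K / n) * (\<integral>\<^sup>+ r. ennreal (?sing i r) \<partial>lborel))"
    using int by (subst nn_integral_sum) (auto simp: nn_integral_cmult borel_measurable_integrable)
  also have "\<dots> \<le> (\<Sum>i<n. ennreal (K / n) * ennreal F)"
    unfolding F_def
    by (intro sum_mono mult_left_mono nn_integral_abs_powr_weight_le[OF s t b nn int bd]) simp
  also have "\<dots> = (\<Sum>i<n. ennreal (K / n * F))"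
    using K F by (intro sum.cong refl ennreal_mult[symmetric]) auto
  also have "\<dots> = ennreal (\<Sum>i<n. K / n * F)"
    using K F by (intro sum_ennreal) auto
  also have "(\<Sum>i<n. K / n * F) = K * F"
    using n by simp
  finally show ?thesis by (simp add: n_def K_def F_def)
qed

lemma powr_tradeoff_at_optimum:
  fixes a b s :: real
  assumes a: "0 < a" and b: "0 < b" and s: "0 < s" "s < 1"
  defines "t \<equiv> s * a / (2 * b)"
  shows "t powr (-s) * a + 2 * t powr (1 - s) / (1 - s) * b
       = a powr (1 - s) * b powr s * (2 powr s * s powr (- s) / (1 - s))"
proof -
  have t: "0 < t" using a b s by (simp add: t_def)
  have "t powr (1 - s) = t powr (-s) * t"
    using t powr_add[of t 1 "-s"] by simp
  then have "t powr (-s) * a + 2 * t powr (1 - s) / (1 - s) * b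
             = t powr (-s) * (a + 2 * t * b / (1 - s))"
    by (simp add: algebra_simps)
  also have "a + 2 * t * b / (1 - s) = a / (1 - s)"
    using s b by (simp add: t_def field_simps)
  finally have lhs: "t powr (-s) * a + 2 * t powr (1 - s) / (1 - s) * b = t powr (-s) * (a / (1 - s))" .
  have "ln (t powr (-s)) = ln (s powr (-s) * a powr (-s) * 2 powr s * b powr s)"
    using a b s t unfolding t_def by (simp add: ln_mult ln_div algebra_simps)
  then have tpow: "t powr (-s) = s powr (-s) * a powr (-s) * 2 powr s * b powr s"
    using a b s t by (subst (asm) ln_inj_iff) auto
  have apow: "a powr (-s) * a = a powr (1 - s)"
    using a powr_add[of a 1 "-s"] by simp
  have "t powr (-s) * (a / (1 - s)) = s powr (-s) * (a powr (-s) * a) * 2 powr s * b powr s / (1 - s)"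
    unfolding tpow by simp
  then show ?thesis
    unfolding lhs apow by (simp add: mult_ac)
qed

lemma powr_tradeoff_optimum_le:
  fixes a b s l :: real
  assumes a: "0 < a" and b: "0 < b" and s: "0 < s" "s < 1" and l: "0 < l"
  shows "a powr (1 - s) * b powr s * (2 powr s * s powr (- s) / (1 - s))
      \<le> l powr (-s) * a + 2 * l powr (1 - s) / (1 - s) * b"
proof -
  define X where "X = l powr (-s) * a / (1 - s)"
  define Y where "Y = 2 * l powr (1 - s) * b / s / (1 - s)"
  have X: "0 < X" and Y: "0 < Y" using a b s l by (auto simp: X_def Y_def)
  have "ln (s - s * s) = ln s + ln (1 - s)"
    using s ln_mult[of s "1 - s"] by (simp add: algebra_simps)
  then have "ln (X powr (1 - s) * Y powr s)
             = ln (a powr (1 - s) * b powr s * (2 powr s * s powr (- s) / (1 - s)))"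
    using X Y a b s l by (simp add: ln_mult ln_div ln_powr X_def Y_def algebra_simps)
  then have "a powr (1 - s) * b powr s * (2 powr s * s powr (- s) / (1 - s)) = X powr (1 - s) * Y powr s"
    using X Y a b s by simp
  also have "\<dots> \<le> (1 - s) * X + s * Y"
    using s X Y by (intro Youngs_inequality_0) auto
  also have "(1 - s) * X = l powr (-s) * a"
    using s by (simp add: X_def)
  also have "s * Y = 2 * l powr (1 - s) / (1 - s) * b"
    using s by (simp add: Y_def field_simps)
  finally show ?thesis .
qed

lemma not_AE_False_lborel: "\<not> (AE x in (lborel::real measure). False)"
  using ae_filter_eq_bot_iff[of "lborel::real measure"] trivial_limit_def by force

lemma AE_abs_le_linf_norm:
  assumes "esssup lborel (\<lambda>x. ereal \<bar>f x\<bar>) < \<infinity>"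
  shows "AE x in lborel. \<bar>f x\<bar> \<le> linf_norm f"
proof -
  define E where "E = esssup lborel (\<lambda>x. ereal \<bar>f x\<bar>)"
  have AE: "AE x in lborel. ereal \<bar>f x\<bar> \<le> E"
    unfolding E_def by (rule esssup_AE)
  have "E \<noteq> -\<infinity>"
  proof
    assume "E = -\<infinity>"
    with AE have "AE x in (lborel :: real measure). False" by (auto elim: eventually_mono)
    with not_AE_False_lborel show False by blast
  qed
  with assms have "E = ereal (linf_norm f)"
    unfolding linf_norm_def E_def[symmetric] by (cases E) auto
  with AE show ?thesis by (auto elim!: eventually_mono)
qed

lemma linf_norm_nonneg: "0 \<le> linf_norm f"
proof (cases "esssup lborel (\<lambda>x. ereal \<bar>f x\<bar>) < \<infinity>")
  case True
  show ?thesis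
  proof (rule ccontr)
    assume "\<not> 0 \<le> linf_norm f"
    with AE_abs_le_linf_norm[OF True] have "AE x in (lborel :: real measure). False"
      by (elim eventually_mono) (meson abs_ge_zero order_trans)
    with not_AE_False_lborel show False by blast
  qed
qed (simp add: linf_norm_def top.not_eq_extremum)

lemma nn_integral_det_affine_powr_le_norms:
  fixes A V :: "complex ^ 'n ^ 'n" and \<rho> :: "real \<Rightarrow> real" and s :: real
  assumes V: "det V \<noteq> 0"
    and nn: "\<And>r. 0 \<le> \<rho> r" and int: "integrable lborel \<rho>"
    and bdd: "esssup lborel (\<lambda>x. ereal \<bar>\<rho> x\<bar>) < \<infinity>"
    and s: "0 < s" "s < 1"
  shows "(\<integral>\<^sup>+ r. ennreal (cmod (det (A + r *\<^sub>R V)) powr (- s / CARD('n)) * \<rho> r) \<partial>lborel)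
     \<le> ennreal (cmod (det V) powr (- s / CARD('n)) * l1_norm \<rho> powr (1 - s)
                 * linf_norm \<rho> powr s * (2 powr s * s powr (- s) / (1 - s)))"
    (is "?I \<le> ennreal ?bound")
proof -
  define a where "a = l1_norm \<rho>"
  define b where "b = linf_norm \<rho>"
  have a_int: "a = (\<integral>r. \<rho> r \<partial>lborel)" using nn by (simp add: a_def l1_norm_def)
  have a: "0 \<le> a" and b: "0 \<le> b" using nn linf_norm_nonneg by (simp_all add: a_int b_def)
  have bd: "AE r in lborel. \<rho> r \<le> b"
    using AE_abs_le_linf_norm[OF bdd] by (auto simp: b_def elim!: eventually_mono)
  consider "a = 0 \<or> b = 0" | "0 < a" "0 < b" using a b by linarith
  then show ?thesis
  proof cases
    case 1
    have "AE r in lborel. \<rho> r = 0"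
    proof (cases "a = 0")
      case True
      then show ?thesis using integral_nonneg_eq_0_iff_AE[of lborel \<rho>] int nn by (simp add: a_int)
    next
      case False
      with 1 bd show ?thesis using nn by (auto elim!: eventually_mono intro: antisym)
    qed
    then have "?I = 0"
      by (subst nn_integral_cong_AE[where v = "\<lambda>_. 0"]) (auto elim!: eventually_mono)
    then show ?thesis by simp
  next
    case 2
    define t where "t = s * a / (2 * b)"
    have "?I \<le> ennreal (cmod (det V) powr (- s / CARD('n))
                         * (t powr (-s) * a + 2 * t powr (1 - s) / (1 - s) * b))"
      using nn_integral_det_affine_powr_le[OF V s _ b nn int bd, of t A] 2 s
      by (simp add: t_def a_int)
    also have "t powr (-s) * a + 2 * t powr (1 - s) / (1 - s) * b
               = a powr (1 - s) * b powr s * (2 powr s * s powr (- s) / (1 - s))"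
      unfolding t_def using 2 s by (rule powr_tradeoff_at_optimum)
    finally show ?thesis
      by (simp add: a_def b_def mult_ac)
  qed
qed

theorem lemma3p2:
  fixes A V :: "complex ^ 'n ^ 'n"
    and \<rho> :: "real \<Rightarrow> real"
    and s lam :: real
  assumes "invertible V"
    and "\<And>r. 0 \<le> \<rho> r"
    and "integrable lborel \<rho>"
    and "esssup lborel (\<lambda>x. ereal \<bar>\<rho> x\<bar>) < \<infinity>"
    and "0 < s" and "s < 1"
    and "0 < lam"
  shows "(\<integral>\<^sup>+ r. ennreal (cmod (det (A + r *\<^sub>R V)) powr (- s / real CARD('n)) * \<rho> r) \<partial>lborel)
           \<le> ennreal (cmod (det V) powr (- s / real CARD('n)) * l1_norm \<rho> powr (1 - s)
                      * linf_norm \<rho> powr s * (2 powr s * s powr (- s) / (1 - s)))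
    \<and> cmod (det V) powr (- s / real CARD('n)) * l1_norm \<rho> powr (1 - s)
                      * linf_norm \<rho> powr s * (2 powr s * s powr (- s) / (1 - s))
      \<le> cmod (det V) powr (- s / real CARD('n)) *
         (lam powr (- s) * l1_norm \<rho> + 2 * lam powr (1 - s) / (1 - s) * linf_norm \<rho>)"
    (is "_ \<and> ?bound \<le> ?bound_lam")
proof
  have "det V \<noteq> 0" using assms(1) invertible_det_nz by blast
  then show "(\<integral>\<^sup>+ r. ennreal (cmod (det (A + r *\<^sub>R V)) powr (- s / real CARD('n)) * \<rho> r) \<partial>lborel)
               \<le> ennreal ?bound"
    using assms(2-6) by (rule nn_integral_det_affine_powr_le_norms)
  define K where "K = cmod (det V) powr (- s / real CARD('n))"
  define a where "a = l1_norm \<rho>"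
  define b where "b = linf_norm \<rho>"
  have K: "0 \<le> K" and a: "0 \<le> a" and b: "0 \<le> b"
    using assms(2) linf_norm_nonneg by (simp_all add: K_def a_def b_def l1_norm_def)
  consider "a = 0 \<or> b = 0" | "0 < a" "0 < b" using a b by linarith
  then have "K * (a powr (1 - s) * b powr s * (2 powr s * s powr (- s) / (1 - s)))
             \<le> K * (lam powr (-s) * a + 2 * lam powr (1 - s) / (1 - s) * b)"
  proof cases
    case 1
    then show ?thesis using K a b assms(5-7) by auto
  next
    case 2
    show ?thesis using powr_tradeoff_optimum_le[OF 2 assms(5-7)] K by (rule mult_left_mono)
  qed
  then show "?bound \<le> ?bound_lam"
    by (simp add: K_def a_def b_def mult_ac)
qed

end
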